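(* Let $d\ge2$, $N\in\mathbb N$ and $\theta>0$. The $d$-types Moran model $\{k(t)\}_{t\ge0}$ with population size $N$ and symmetric parent-independent mutation at rate $\theta$ is self-dual with duality function $\bar D_N(k,\xi)=\prod_{i=1}^d\frac{k_i!}{(k_i-\xi_i)!}\frac{\Gamma(\frac{2\theta}{d-1})}{\Gamma(\xi_i+\frac{2\theta}{d-1})}$, where $k_d=N-\sum_{i=1}^{d-1}k_i$ and $\xi_d=N-\sum_{i=1}^{d-1}\xi_i$; that is, for all $k,\xi$ in the state space and all $t>0$, $\mathbb E_k\bar D_N(k(t),\xi)=\mathbb E_\xi\bar D_N(k,\xi(t))$, where $\{\xi(t)\}$ is a copy of the same Moran model.
   Context: $\mathbb N_0=\{0,1,2,\dots\}$, $e_i$ the $i$-th unit vector; $\frac{k!}{(k-\xi)!}$ is interpreted as $0$ when $\xi>k$. The state space is $\{k\in\mathbb N_0^{d-1}:\sum_jk_j\le N\}$ and the generator is $\mathscr L^{Mor}_{N,d,\theta}g(k)=\frac12\sum_{1\le i<j\le d-1}\big[k_i(k_j+\frac{2\theta}{d-1})(g(k-e_i+e_j)-g(k))+k_j(k_i+\frac{2\theta}{d-1})(g(k+e_i-e_j)-g(k))\big]+\frac12\sum_{i=1}^{d-1}\big[(N-\sum_{j=1}^{d-1}k_j)(k_i+\frac{2\theta}{d-1})(g(k+e_i)-g(k))+k_i(N-\sum_{j=1}^{d-1}k_j+\frac{2\theta}{d-1})(g(k-e_i)-g(k))\big]$. $\mathbb E_k$ denotes expectation for the process started at $k$. *)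

theory Defs
  imports "HOL-Analysis.Analysis"
begin

text \<open>States are functions k :: nat \<Rightarrow> nat, where k i for i in {1..d-1} are the
  counts k_1..k_(d-1) and k i = 0 for all other i.\<close>

definition moran_states :: "nat \<Rightarrow> nat \<Rightarrow> (nat \<Rightarrow> nat) set" where
  "moran_states d N = {k. (\<forall>i. i \<notin> {1..d-1} \<longrightarrow> k i = 0) \<and> (\<Sum>j\<in>{1..d-1}. k j) \<le> N}"

definition moran_gen :: "nat \<Rightarrow> nat \<Rightarrow> real \<Rightarrow> ((nat \<Rightarrow> nat) \<Rightarrow> real) \<Rightarrow> (nat \<Rightarrow> nat) \<Rightarrow> real" where
  "moran_gen d N \<theta> g k =
     (let c = 2 * \<theta> / real (d - 1);
          s = real (\<Sum>j\<in>{1..d-1}. k j)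
      in 1/2 * (\<Sum>i\<in>{1..d-1}. \<Sum>j\<in>{i+1..d-1}.
                 real (k i) * (real (k j) + c) * (g (k(i := k i - 1, j := k j + 1)) - g k)
               + real (k j) * (real (k i) + c) * (g (k(i := k i + 1, j := k j - 1)) - g k))
       + 1/2 * (\<Sum>i\<in>{1..d-1}.
                 (real N - s) * (real (k i) + c) * (g (k(i := k i + 1)) - g k)
               + real (k i) * (real N - s + c) * (g (k(i := k i - 1)) - g k)))"

text \<open>Expectation E_k g(k(t)) for the finite-state continuous-time Markov chain with
  generator L: the semigroup exp(tL) = \<Sum>n. t^n/n! L^n applied to g, evaluated at k.\<close>

definition moran_expect :: "nat \<Rightarrow> nat \<Rightarrow> real \<Rightarrow> real \<Rightarrow> ((nat \<Rightarrow> nat) \<Rightarrow> real) \<Rightarrow> (nat \<Rightarrow> nat) \<Rightarrow> real" where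
  "moran_expect d N \<theta> t g k = (\<Sum>n. t ^ n / fact n * ((moran_gen d N \<theta> ^^ n) g) k)"

text \<open>Falling factorial k!/(k-\<xi>)!, interpreted as 0 when \<xi> > k.\<close>

definition falling_ratio :: "nat \<Rightarrow> nat \<Rightarrow> real" where
  "falling_ratio a b = (if b \<le> a then fact a / fact (a - b) else 0)"

definition ext_state :: "nat \<Rightarrow> nat \<Rightarrow> (nat \<Rightarrow> nat) \<Rightarrow> nat \<Rightarrow> nat" where
  "ext_state d N k = k(d := N - (\<Sum>j\<in>{1..d-1}. k j))"

definition moran_dual :: "nat \<Rightarrow> nat \<Rightarrow> real \<Rightarrow> (nat \<Rightarrow> nat) \<Rightarrow> (nat \<Rightarrow> nat) \<Rightarrow> real" where
  "moran_dual d N \<theta> k \<xi> =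
     (let c = 2 * \<theta> / real (d - 1)
      in \<Prod>i\<in>{1..d}. falling_ratio (ext_state d N k i) (ext_state d N \<xi> i)
                      * Gamma c / Gamma (real (ext_state d N \<xi> i) + c))"

end

theory Submission
  imports Defs
begin

text \<open>
  With \<open>c = 2\<theta>/(d-1)\<close> the duality function is diagonal: both extended states sum to \<open>N\<close>,
  so for \<open>k \<noteq> \<xi>\<close> some coordinate has \<open>k_i < \<xi>_i\<close> and a falling factorial vanishes, while
  \<open>D(k,k) = w(k) = \<Prod>_i k_i! / (c)_{k_i}\<close> because \<open>\<Gamma>(n+c)/\<Gamma>(c) = (c)_n\<close>.
  Self-duality therefore amounts to detailed balance \<open>q(k,\<xi>) w(\<xi>) = q(\<xi>,k) w(k)\<close> for the jump
  rates, i.e. reversibility with respect to \<open>1/w\<close>, and for each elementary move this reduces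
  to the recurrence \<open>(c)_{m+1} = (m+c) (c)_m\<close>. As the generator only reads values on the state
  space and commutes with linear functionals, the one-step identity propagates to all its
  powers, hence to the exponential series defining the semigroup.
\<close>

subsection \<open>Duality for powers of a generator\<close>

definition linear_functional :: "(('a \<Rightarrow> real) \<Rightarrow> real) \<Rightarrow> bool" where
  "linear_functional \<Phi> \<longleftrightarrow>
     (\<forall>f g. \<Phi> (\<lambda>x. f x + g x) = \<Phi> f + \<Phi> g) \<and> (\<forall>a f. \<Phi> (\<lambda>x. a * f x) = a * \<Phi> f)"

lemma linear_functional_add: "linear_functional \<Phi> \<Longrightarrow> \<Phi> (\<lambda>x. f x + g x) = \<Phi> f + \<Phi> g"
  by (simp add: linear_functional_def)

lemma linear_functional_scale: "linear_functional \<Phi> \<Longrightarrow> \<Phi> (\<lambda>x. a * f x) = a * \<Phi> f"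
  by (simp add: linear_functional_def)

lemma linear_functional_diff:
  assumes "linear_functional \<Phi>"
  shows "\<Phi> (\<lambda>x. f x - g x) = \<Phi> f - \<Phi> g"
  using linear_functional_add[OF assms, of f "\<lambda>x. (-1) * g x"] linear_functional_scale[OF assms, of "-1" g]
  by simp

lemma linear_functional_sum:
  assumes "linear_functional \<Phi>"
  shows "\<Phi> (\<lambda>x. \<Sum>i\<in>I. f i x) = (\<Sum>i\<in>I. \<Phi> (f i))"
proof (induction I rule: infinite_finite_induct)
  case (insert i I)
  then show ?case using linear_functional_add[OF assms, of "f i" "\<lambda>x. \<Sum>i\<in>I. f i x"] by simp
qed (use linear_functional_scale[OF assms, of 0 "\<lambda>x. 0"] in simp_all)

lemma linear_functional_funpow:
  fixes L :: "('a \<Rightarrow> real) \<Rightarrow> 'a \<Rightarrow> real"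
  assumes "\<And>z. linear_functional (\<lambda>h. L h z)"
  shows "linear_functional (\<lambda>h. (L ^^ n) h z)"
proof (induction n arbitrary: z)
  case 0
  then show ?case by (simp add: linear_functional_def)
next
  case (Suc n)
  have "(L ^^ n) (\<lambda>x. f x + g x) = (\<lambda>x. (L ^^ n) f x + (L ^^ n) g x)"
    and "(L ^^ n) (\<lambda>x. a * f x) = (\<lambda>x. a * (L ^^ n) f x)" for f g a
    using Suc.IH by (simp_all add: linear_functional_def fun_eq_iff)
  then show ?case using assms by (simp add: linear_functional_def)
qed

lemma funpow_local:
  fixes L :: "('a \<Rightarrow> real) \<Rightarrow> 'a \<Rightarrow> real"
  assumes "\<And>f g k. \<forall>x\<in>S. f x = g x \<Longrightarrow> k \<in> S \<Longrightarrow> L f k = L g k"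
    and "\<forall>x\<in>S. f x = g x" "k \<in> S"
  shows "(L ^^ n) f k = (L ^^ n) g k"
  using assms(3)
proof (induction n arbitrary: k)
  case (Suc n)
  then show ?case by (simp add: assms(1))
qed (simp add: assms(2))

text \<open>Hypothesis \<open>commute\<close> holds whenever each \<open>L h z\<close> is a finite linear combination of
  values of \<open>h\<close>, as for the generator of a finite jump process.\<close>

lemma funpow_duality:
  fixes L :: "('a \<Rightarrow> real) \<Rightarrow> 'a \<Rightarrow> real" and D :: "'a \<Rightarrow> 'a \<Rightarrow> real"
  assumes local: "\<And>f g k. \<forall>x\<in>S. f x = g x \<Longrightarrow> k \<in> S \<Longrightarrow> L f k = L g k"
    and linear: "\<And>z. linear_functional (\<lambda>h. L h z)"
    and commute: "\<And>\<Phi> H z. linear_functional \<Phi> \<Longrightarrow>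
                    L (\<lambda>y. \<Phi> (\<lambda>x. H x y)) z = \<Phi> (\<lambda>x::'a. L (\<lambda>y. H x y) z)"
    and dual: "\<And>k \<xi>. k \<in> S \<Longrightarrow> \<xi> \<in> S \<Longrightarrow> L (\<lambda>k'. D k' \<xi>) k = L (\<lambda>\<xi>'. D k \<xi>') \<xi>"
    and "k \<in> S" "\<xi> \<in> S"
  shows "(L ^^ n) (\<lambda>k'. D k' \<xi>) k = (L ^^ n) (\<lambda>\<xi>'. D k \<xi>') \<xi>"
  using assms(5,6)
proof (induction n arbitrary: k \<xi>)
  case (Suc n)
  have "(L ^^ Suc n) (\<lambda>k'. D k' \<xi>) k = (L ^^ n) (\<lambda>k'. L (\<lambda>k''. D k'' \<xi>) k') k"
    by (simp only: funpow_Suc_right o_apply)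
  also have "\<dots> = (L ^^ n) (\<lambda>k'. L (\<lambda>\<xi>'. D k' \<xi>') \<xi>) k"
    using Suc.prems by (intro funpow_local[OF local]) (auto intro: dual)
  also have "\<dots> = L (\<lambda>\<xi>'. (L ^^ n) (\<lambda>k'. D k' \<xi>') k) \<xi>"
    by (rule commute[OF linear_functional_funpow[where L = L, OF linear], symmetric])
  also have "\<dots> = L (\<lambda>\<xi>'. (L ^^ n) (\<lambda>\<xi>''. D k \<xi>'') \<xi>') \<xi>"
    using Suc by (intro local) auto
  also have "\<dots> = (L ^^ Suc n) (\<lambda>\<xi>'. D k \<xi>') \<xi>"
    by simp
  finally show ?case .
qed simp

subsection \<open>The state space and the generator\<close>

lemma sum_fun_upd:
  fixes f :: "'a \<Rightarrow> nat"
  assumes "finite A" "i \<in> A"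
  shows "sum (f(i := a)) A + f i = sum f A + a"
proof -
  have "sum (f(i := a)) (A - {i}) = sum f (A - {i})"
    by (rule sum.cong) auto
  then show ?thesis
    using sum.remove[OF assms, of "f(i := a)"] sum.remove[OF assms, of f] by simp
qed

lemma sum_transfer:
  fixes k :: "'a \<Rightarrow> nat"
  assumes "finite A" "i \<in> A" "j \<in> A" "i \<noteq> j" "k i \<noteq> 0"
  shows "sum (k(i := k i - 1, j := k j + 1)) A = sum k A"
  using sum_fun_upd[OF assms(1,3), of "k(i := k i - 1)" "k j + 1"]
    sum_fun_upd[OF assms(1,2), of k "k i - 1"] assms(4,5)
  by simp

lemma sum_increment:
  fixes k :: "'a \<Rightarrow> nat"
  assumes "finite A" "i \<in> A"
  shows "sum (k(i := k i + 1)) A = sum k A + 1"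
  using sum_fun_upd[OF assms, of k "k i + 1"] by simp

lemma sum_decrement:
  fixes k :: "'a \<Rightarrow> nat"
  assumes "finite A" "i \<in> A" "k i \<noteq> 0"
  shows "sum (k(i := k i - 1)) A + 1 = sum k A"
  using sum_fun_upd[OF assms(1,2), of k "k i - 1"] assms(3) by simp

lemma transfer_in_moran_states:
  assumes "k \<in> moran_states d N" "i \<in> {1..d-1}" "j \<in> {1..d-1}" "i \<noteq> j" "k i \<noteq> 0"
  shows "k(i := k i - 1, j := k j + 1) \<in> moran_states d N"
  using assms sum_transfer[of "{1..d-1}" i j k] unfolding moran_states_def by auto

lemma increment_in_moran_states:
  assumes "k \<in> moran_states d N" "i \<in> {1..d-1}" "sum k {1..d-1} < N"
  shows "k(i := k i + 1) \<in> moran_states d N"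
  using assms sum_increment[of "{1..d-1}" i k] unfolding moran_states_def by auto

lemma decrement_in_moran_states:
  assumes "k \<in> moran_states d N" "i \<in> {1..d-1}"
  shows "k(i := k i - 1) \<in> moran_states d N"
proof (cases "k i = 0")
  case True
  then have "k(i := k i - 1) = k" by auto
  then show ?thesis using assms(1) by simp
next
  case False
  then show ?thesis
    using assms sum_decrement[of "{1..d-1}" i k] unfolding moran_states_def by auto
qed

text \<open>Every jump of the generator that would leave the state space has rate zero.\<close>

lemma moran_gen_local:
  assumes fg: "\<forall>x\<in>moran_states d N. f x = g x" and k: "k \<in> moran_states d N"
  shows "moran_gen d N \<theta> f k = moran_gen d N \<theta> g k"
proof -
  have fk: "f k = g k" using assms by auto
  have transfer: "real (k i) * X * (f (k(i := k i - 1, j := k j + 1)) - f k)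
          = real (k i) * X * (g (k(i := k i - 1, j := k j + 1)) - g k)"
    if "i \<in> {1..d-1}" "j \<in> {1..d-1}" "i \<noteq> j" for i j X
    using transfer_in_moran_states[OF k that] fg fk by (cases "k i = 0") simp_all
  have transfer': "real (k j) * X * (f (k(i := k i + 1, j := k j - 1)) - f k)
          = real (k j) * X * (g (k(i := k i + 1, j := k j - 1)) - g k)"
    if "i \<in> {1..d-1}" "j \<in> {1..d-1}" "i \<noteq> j" for i j X
    using transfer[of j i X] that by (simp add: fun_upd_twist)
  have increment: "(real N - real (sum k {1..d-1})) * X * (f (k(i := k i + 1)) - f k)
          = (real N - real (sum k {1..d-1})) * X * (g (k(i := k i + 1)) - g k)"
    if "i \<in> {1..d-1}" for i X
  proof (cases "sum k {1..d-1} < N")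
    case True
    then show ?thesis using increment_in_moran_states[OF k that True] fg fk by simp
  next
    case False
    then have "sum k {1..d-1} = N" using k by (simp add: moran_states_def)
    then show ?thesis by simp
  qed
  have decrement: "real (k i) * X * (f (k(i := k i - 1)) - f k)
          = real (k i) * X * (g (k(i := k i - 1)) - g k)"
    if "i \<in> {1..d-1}" for i X
    using decrement_in_moran_states[OF k that] fg fk by simp
  show ?thesis
    unfolding moran_gen_def Let_def
    by (intro arg_cong2[where f="(+)"] arg_cong[where f="(*) (1/2)"] sum.cong refl)
      (rule transfer transfer' increment decrement; force)+
qed

lemma linear_functional_moran_gen: "linear_functional (\<lambda>g. moran_gen d N \<theta> g k)"
proof -
  have add: "c * ((a + b) - (a' + b')) = c * (a - a') + c * (b - b')"
    and scale: "c * (e * a - e * a') = e * (c * (a - a'))" for a a' b b' c e :: real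
    by (simp_all add: algebra_simps)
  show ?thesis
    unfolding linear_functional_def moran_gen_def Let_def
    by (simp only: add scale sum.distrib distrib_left add_ac flip: sum_distrib_left) simp
qed

lemma moran_gen_commute:
  assumes "linear_functional \<Phi>"
  shows "moran_gen d N \<theta> (\<lambda>y. \<Phi> (\<lambda>x. H x y)) z = \<Phi> (\<lambda>x. moran_gen d N \<theta> (\<lambda>y. H x y) z)"
  unfolding moran_gen_def Let_def
  by (simp only: linear_functional_add[OF assms] linear_functional_scale[OF assms]
      linear_functional_sum[OF assms] linear_functional_diff[OF assms])

subsection \<open>The diagonal weight\<close>

definition fact_pochhammer_ratio :: "real \<Rightarrow> nat \<Rightarrow> real" where
  "fact_pochhammer_ratio c n = fact n / pochhammer c n"

lemma fact_Gamma_ratio_eq: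
  assumes "c > 0"
  shows "fact n * Gamma c / Gamma (real n + c) = fact_pochhammer_ratio c n"
proof -
  have "c \<notin> \<int>\<^sub>\<le>\<^sub>0" using assms nonpos_Ints_nonpos by fastforce
  then show ?thesis
    using Gamma_real_pos[OF assms]
    by (simp add: fact_pochhammer_ratio_def pochhammer_Gamma add.commute)
qed

lemma fact_pochhammer_ratio_Suc:
  assumes "c > 0"
  shows "fact_pochhammer_ratio c (Suc m) = real (Suc m) / (real m + c) * fact_pochhammer_ratio c m"
proof -
  have "fact (Suc m) / pochhammer c (Suc m) = (real (Suc m) * fact m) / ((real m + c) * pochhammer c m)"
    by (simp only: fact_Suc pochhammer_rec' of_nat_mult add.commute)
  then show ?thesis
    by (simp add: fact_pochhammer_ratio_def)
qed

lemma prod_fact_pochhammer_ratio_transfer: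
  assumes "finite A" "i \<in> A" "j \<in> A" "i \<noteq> j" "K' i + 1 = K i" "K' j = K j + 1"
    and "\<forall>l\<in>A - {i, j}. K' l = K l" "c > 0"
  shows "real (K i) * (real (K j) + c) * (\<Prod>l\<in>A. fact_pochhammer_ratio c (K' l))
       = real (K' j) * (real (K' i) + c) * (\<Prod>l\<in>A. fact_pochhammer_ratio c (K l))"
proof -
  let ?r = "fact_pochhammer_ratio c"
  have split: "(\<Prod>l\<in>A. ?r (F l)) = ?r (F i) * (?r (F j) * (\<Prod>l\<in>A - {i, j}. ?r (F l)))"
    for F
  proof -
    have "(\<Prod>l\<in>A - {i}. ?r (F l)) = ?r (F j) * (\<Prod>l\<in>A - {i} - {j}. ?r (F l))"
      using assms(1,3,4) by (intro prod.remove) auto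
    moreover have "A - {i} - {j} = A - {i, j}" by auto
    ultimately show ?thesis
      using prod.remove[OF assms(1,2), of "\<lambda>l. ?r (F l)"] by simp
  qed
  have rest: "(\<Prod>l\<in>A - {i, j}. ?r (K' l)) = (\<Prod>l\<in>A - {i, j}. ?r (K l))"
    using assms(7) by (intro prod.cong) auto
  obtain m n where eqs: "K i = Suc m" "K' i = m" "K j = n" "K' j = Suc n"
    using assms(5,6) by simp
  have "real m + c \<noteq> 0" "real n + c \<noteq> 0"
    using assms(8) by (simp_all add: add_pos_pos)
  then show ?thesis
    unfolding split[of K] split[of K'] rest eqs fact_pochhammer_ratio_Suc[OF assms(8)]
    by (simp add: field_simps)
qed

definition dual_weight :: "nat \<Rightarrow> nat \<Rightarrow> real \<Rightarrow> (nat \<Rightarrow> nat) \<Rightarrow> real" where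
  "dual_weight d N c k = (\<Prod>i\<in>{1..d}. fact_pochhammer_ratio c (ext_state d N k i))"

lemma ext_state_below: "i \<in> {1..d-1} \<Longrightarrow> ext_state d N k i = k i"
  by (auto simp: ext_state_def)

lemma ext_state_last: "ext_state d N k d = N - sum k {1..d-1}"
  by (simp add: ext_state_def)

lemma sum_ext_state:
  assumes "d \<ge> 2" "k \<in> moran_states d N"
  shows "(\<Sum>i\<in>{1..d}. ext_state d N k i) = N"
proof -
  have "{1..d} = insert d {1..d-1}" using assms(1) by auto
  moreover have "(\<Sum>i\<in>{1..d-1}. ext_state d N k i) = sum k {1..d-1}"
    by (rule sum.cong) (auto simp: ext_state_below)
  ultimately show ?thesis
    using assms by (simp add: ext_state_last moran_states_def)
qed

text \<open>Both extended states sum to \<open>N\<close>, so coordinatewise domination forces equality.\<close>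

lemma ext_state_le_imp_eq:
  assumes "d \<ge> 2" "k \<in> moran_states d N" "\<xi> \<in> moran_states d N"
    and le: "\<forall>i\<in>{1..d}. ext_state d N \<xi> i \<le> ext_state d N k i"
  shows "k = \<xi>"
proof
  fix i
  show "k i = \<xi> i"
  proof (cases "i \<in> {1..d-1}")
    case True
    have "(\<Sum>i\<in>{1..d}. ext_state d N \<xi> i) = (\<Sum>i\<in>{1..d}. ext_state d N k i)"
      using sum_ext_state[OF assms(1,2)] sum_ext_state[OF assms(1,3)] by simp
    then have "ext_state d N \<xi> i = ext_state d N k i"
      by (rule sum_mono_inv) (use le True in auto)
    then show ?thesis using True by (simp add: ext_state_below)
  next
    case False
    then show ?thesis using assms(2,3) by (simp add: moran_states_def)
  qed
qed

lemma moran_dual_diagonal: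
  assumes "d \<ge> 2" "\<theta> > 0" "k \<in> moran_states d N" "\<xi> \<in> moran_states d N"
  shows "moran_dual d N \<theta> k \<xi> = (if k = \<xi> then dual_weight d N (2 * \<theta> / real (d - 1)) k else 0)"
proof (cases "k = \<xi>")
  case True
  have "2 * \<theta> / real (d - 1) > 0" using assms(1,2) by simp
  then show ?thesis
    unfolding True moran_dual_def Let_def dual_weight_def if_P[OF refl]
    by (intro prod.cong) (simp_all add: falling_ratio_def fact_Gamma_ratio_eq)
next
  case False
  then obtain i where i: "i \<in> {1..d}" "ext_state d N k i < ext_state d N \<xi> i"
    using ext_state_le_imp_eq[OF assms(1,3,4)] not_le by blast
  then have "moran_dual d N \<theta> k \<xi> = 0"
    unfolding moran_dual_def Let_def by (auto simp: falling_ratio_def intro!: bexI[of _ i])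
  with False show ?thesis by simp
qed

lemma dual_weight_transfer:
  assumes "d \<ge> 2" "c > 0" "i \<in> {1..d-1}" "j \<in> {1..d-1}" "i \<noteq> j" "k i \<noteq> 0"
  defines "k' \<equiv> k(i := k i - 1, j := k j + 1)"
  shows "real (k i) * (real (k j) + c) * dual_weight d N c k'
       = real (k' j) * (real (k' i) + c) * dual_weight d N c k"
proof -
  have same_sum: "sum k' {1..d-1} = sum k {1..d-1}"
    unfolding k'_def using assms(3-6) by (intro sum_transfer) auto
  have "real (ext_state d N k i) * (real (ext_state d N k j) + c)
          * (\<Prod>l\<in>{1..d}. fact_pochhammer_ratio c (ext_state d N k' l))
      = real (ext_state d N k' j) * (real (ext_state d N k' i) + c)
          * (\<Prod>l\<in>{1..d}. fact_pochhammer_ratio c (ext_state d N k l))"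
  proof (rule prod_fact_pochhammer_ratio_transfer)
    show "\<forall>l\<in>{1..d} - {i, j}. ext_state d N k' l = ext_state d N k l"
      using same_sum by (auto simp: ext_state_def k'_def)
  qed (use assms in \<open>auto simp: ext_state_below\<close>)
  then show ?thesis
    using assms(3,4) by (simp add: dual_weight_def ext_state_below)
qed

lemma dual_weight_increment:
  assumes "d \<ge> 2" "c > 0" "i \<in> {1..d-1}" "sum k {1..d-1} < N"
  defines "k' \<equiv> k(i := k i + 1)"
  shows "(real N - real (sum k {1..d-1})) * (real (k i) + c) * dual_weight d N c k'
       = real (k' i) * (real N - real (sum k' {1..d-1}) + c) * dual_weight d N c k"
proof -
  have succ_sum: "sum k' {1..d-1} = sum k {1..d-1} + 1"
    unfolding k'_def using assms(3) by (intro sum_increment) auto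
  have "real (ext_state d N k d) * (real (ext_state d N k i) + c)
          * (\<Prod>l\<in>{1..d}. fact_pochhammer_ratio c (ext_state d N k' l))
      = real (ext_state d N k' i) * (real (ext_state d N k' d) + c)
          * (\<Prod>l\<in>{1..d}. fact_pochhammer_ratio c (ext_state d N k l))"
  proof (rule prod_fact_pochhammer_ratio_transfer)
    show "ext_state d N k' d + 1 = ext_state d N k d"
      using succ_sum assms(4) by (simp add: ext_state_last)
    show "\<forall>l\<in>{1..d} - {d, i}. ext_state d N k' l = ext_state d N k l"
      by (auto simp: ext_state_def k'_def)
  qed (use assms in \<open>auto simp: ext_state_below\<close>)
  then show ?thesis
    using assms(3,4) succ_sum by (simp add: dual_weight_def ext_state_below ext_state_last of_nat_diff)
qed

subsection \<open>Detailed balance\<close>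

definition diagonal_dual :: "nat \<Rightarrow> nat \<Rightarrow> real \<Rightarrow> (nat \<Rightarrow> nat) \<Rightarrow> (nat \<Rightarrow> nat) \<Rightarrow> real" where
  "diagonal_dual d N c \<xi> x = (if x = \<xi> then dual_weight d N c \<xi> else 0)"

lemma transfer_rate_balance:
  assumes "d \<ge> 2" "c > 0" "i \<in> {1..d-1}" "j \<in> {1..d-1}" "i \<noteq> j"
  shows "real (k i) * (real (k j) + c) * diagonal_dual d N c \<xi> (k(i := k i - 1, j := k j + 1))
       = real (\<xi> j) * (real (\<xi> i) + c) * diagonal_dual d N c k (\<xi>(j := \<xi> j - 1, i := \<xi> i + 1))"
proof (cases "k i \<noteq> 0 \<and> \<xi> = k(i := k i - 1, j := k j + 1)")
  case True
  then have "\<xi>(j := \<xi> j - 1, i := \<xi> i + 1) = k"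
    using assms(5) by (auto simp: fun_eq_iff)
  then show ?thesis
    using True dual_weight_transfer[OF assms, of k N] by (auto simp: diagonal_dual_def)
next
  case False
  then have "real (k i) * diagonal_dual d N c \<xi> (k(i := k i - 1, j := k j + 1)) = 0"
    by (auto simp: diagonal_dual_def)
  moreover have "real (\<xi> j) * diagonal_dual d N c k (\<xi>(j := \<xi> j - 1, i := \<xi> i + 1)) = 0"
  proof (cases "\<xi> j = 0 \<or> \<xi>(j := \<xi> j - 1, i := \<xi> i + 1) \<noteq> k")
    case False
    then have "k = \<xi>(j := \<xi> j - 1, i := \<xi> i + 1)" "\<xi> j \<noteq> 0" by auto
    then have "k i \<noteq> 0 \<and> \<xi> = k(i := k i - 1, j := k j + 1)"
      using assms(5) by (auto simp: fun_eq_iff)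
    with \<open>\<not> (k i \<noteq> 0 \<and> \<xi> = k(i := k i - 1, j := k j + 1))\<close> show ?thesis by blast
  qed (auto simp: diagonal_dual_def)
  ultimately show ?thesis by (metis mult.commute mult_zero_left mult.left_commute)
qed

lemma increment_rate_balance:
  assumes "d \<ge> 2" "c > 0" "i \<in> {1..d-1}" "\<xi> \<in> moran_states d N"
  shows "(real N - real (sum k {1..d-1})) * (real (k i) + c) * diagonal_dual d N c \<xi> (k(i := k i + 1))
       = real (\<xi> i) * (real N - real (sum \<xi> {1..d-1}) + c) * diagonal_dual d N c k (\<xi>(i := \<xi> i - 1))"
proof (cases "\<xi> = k(i := k i + 1)")
  case True
  then have "sum \<xi> {1..d-1} = sum k {1..d-1} + 1"
    using sum_increment[of "{1..d-1}" i k] assms(3) by simp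
  then have "sum k {1..d-1} < N"
    using assms(4) by (simp add: moran_states_def)
  moreover have "\<xi>(i := \<xi> i - 1) = k"
    using True by (auto simp: fun_eq_iff)
  ultimately show ?thesis
    using True dual_weight_increment[OF assms(1-3)] by (auto simp: diagonal_dual_def)
next
  case False
  then have "diagonal_dual d N c \<xi> (k(i := k i + 1)) = 0"
    by (auto simp: diagonal_dual_def)
  moreover have "real (\<xi> i) * diagonal_dual d N c k (\<xi>(i := \<xi> i - 1)) = 0"
  proof (cases "\<xi> i = 0 \<or> \<xi>(i := \<xi> i - 1) \<noteq> k")
    case False
    then have "k = \<xi>(i := \<xi> i - 1)" "\<xi> i \<noteq> 0" by auto
    then have "\<xi> = k(i := k i + 1)"
      by (auto simp: fun_eq_iff)
    with \<open>\<xi> \<noteq> k(i := k i + 1)\<close> show ?thesis by blast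
  qed (auto simp: diagonal_dual_def)
  ultimately show ?thesis by (metis mult.commute mult_zero_left mult.left_commute)
qed

lemma moran_gen_diagonal_dual_symmetric:
  assumes "d \<ge> 2" "\<theta> > 0" "k \<in> moran_states d N" "\<xi> \<in> moran_states d N"
  defines "c \<equiv> 2 * \<theta> / real (d - 1)"
  shows "moran_gen d N \<theta> (diagonal_dual d N c \<xi>) k = moran_gen d N \<theta> (diagonal_dual d N c k) \<xi>"
proof (cases "k = \<xi>")
  case False
  have c: "c > 0" using assms(1,2) by (simp add: c_def)
  have off_diagonal: "diagonal_dual d N c \<xi> k = 0" "diagonal_dual d N c k \<xi> = 0"
    using False by (auto simp: diagonal_dual_def)
  have transfer: "real (k i) * (real (k j) + c) * diagonal_dual d N c \<xi> (k(i := k i - 1, j := k j + 1))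
        + real (k j) * (real (k i) + c) * diagonal_dual d N c \<xi> (k(i := k i + 1, j := k j - 1))
      = real (\<xi> i) * (real (\<xi> j) + c) * diagonal_dual d N c k (\<xi>(i := \<xi> i - 1, j := \<xi> j + 1))
        + real (\<xi> j) * (real (\<xi> i) + c) * diagonal_dual d N c k (\<xi>(i := \<xi> i + 1, j := \<xi> j - 1))"
    if "i \<in> {1..d-1}" "j \<in> {i+1..d-1}" for i j
    using transfer_rate_balance[OF assms(1) c, of i j k N \<xi>]
      transfer_rate_balance[OF assms(1) c, of i j \<xi> N k] that
    by (simp add: fun_upd_twist)
  have increment: "(real N - real (sum k {1..d-1})) * (real (k i) + c) * diagonal_dual d N c \<xi> (k(i := k i + 1))
        + real (k i) * (real N - real (sum k {1..d-1}) + c) * diagonal_dual d N c \<xi> (k(i := k i - 1))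
      = (real N - real (sum \<xi> {1..d-1})) * (real (\<xi> i) + c) * diagonal_dual d N c k (\<xi>(i := \<xi> i + 1))
        + real (\<xi> i) * (real N - real (sum \<xi> {1..d-1}) + c) * diagonal_dual d N c k (\<xi>(i := \<xi> i - 1))"
    if "i \<in> {1..d-1}" for i
    using increment_rate_balance[OF assms(1) c that assms(4), of k]
      increment_rate_balance[OF assms(1) c that assms(3), of \<xi>]
    by simp
  show ?thesis
    unfolding moran_gen_def Let_def c_def[symmetric] off_diagonal diff_zero
    by (intro arg_cong2[where f="(+)"] arg_cong[where f="(*) (1/2)"];
        (rule sum.cong[OF refl])+, (rule transfer increment; assumption))
qed simp

lemma moran_gen_moran_dual_symmetric:
  assumes "d \<ge> 2" "\<theta> > 0" "k \<in> moran_states d N" "\<xi> \<in> moran_states d N"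
  shows "moran_gen d N \<theta> (\<lambda>k'. moran_dual d N \<theta> k' \<xi>) k
       = moran_gen d N \<theta> (\<lambda>\<xi>'. moran_dual d N \<theta> k \<xi>') \<xi>"
proof -
  let ?c = "2 * \<theta> / real (d - 1)"
  have "moran_gen d N \<theta> (\<lambda>k'. moran_dual d N \<theta> k' \<xi>) k = moran_gen d N \<theta> (diagonal_dual d N ?c \<xi>) k"
    using assms by (intro moran_gen_local) (auto simp: moran_dual_diagonal diagonal_dual_def)
  also have "\<dots> = moran_gen d N \<theta> (diagonal_dual d N ?c k) \<xi>"
    by (rule moran_gen_diagonal_dual_symmetric[OF assms])
  also have "\<dots> = moran_gen d N \<theta> (\<lambda>\<xi>'. moran_dual d N \<theta> k \<xi>') \<xi>"
    using assms by (intro moran_gen_local) (auto simp: moran_dual_diagonal diagonal_dual_def)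
  finally show ?thesis .
qed

theorem theorem5p2:
  fixes d N :: nat and \<theta> t :: real and k \<xi> :: "nat \<Rightarrow> nat"
  assumes "d \<ge> 2" and "\<theta> > 0"
    and "k \<in> moran_states d N" and "\<xi> \<in> moran_states d N"
    and "t > 0"
  shows "moran_expect d N \<theta> t (\<lambda>k'. moran_dual d N \<theta> k' \<xi>) k
       = moran_expect d N \<theta> t (\<lambda>\<xi>'. moran_dual d N \<theta> k \<xi>') \<xi>"
proof -
  have "(moran_gen d N \<theta> ^^ n) (\<lambda>k'. moran_dual d N \<theta> k' \<xi>) k
      = (moran_gen d N \<theta> ^^ n) (\<lambda>\<xi>'. moran_dual d N \<theta> k \<xi>') \<xi>" for n
    by (rule funpow_duality[where S = "moran_states d N"])
      (fact moran_gen_local linear_functional_moran_gen moran_gen_commute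
        moran_gen_moran_dual_symmetric[OF assms(1,2)] assms(3,4))+
  then show ?thesis
    by (simp add: moran_expect_def)
qed

end
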